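(* Let $s>1$. There exists a function $f:\mathbb{R}\to\mathbb{C}$ such that $f\in C_{ap}(\mathbb{R})\cap G^s(\mathbb{R})$, but for no constants $B,C>0$ does the estimate $$\sup_{x\in\mathbb{R}}|f^{(j)}(x)|\le B\,C^{j}(j!)^s\quad\text{for all } j=0,1,2,\dots$$ hold.
   Context: $C_{ap}(\mathbb{R})$ denotes the space of (Bohr) uniformly almost periodic functions on $\mathbb{R}$, i.e. the closure in the supremum norm of the trigonometric polynomials $\sum_{\xi}a_\xi e^{2\pi i \xi x}$ (finite sums, $a_\xi\in\mathbb{C}$, $\xi\in\mathbb{R}$). For $s\ge1$ and an open set $\Omega\subseteq\mathbb{R}^d$, the Gevrey space $G^s(\Omega)$ is the set of $f\in C^\infty(\Omega)$ such that for every compact $K\subseteq\Omega$ there is $C_K>0$ with $\sup_{x\in K}|\partial^\alpha f(x)|\le C_K^{1+|\alpha|}(\alpha!)^s$ for all $\alpha\in\mathbb{N}^d$. *)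

theory Defs
  imports "HOL-Analysis.Analysis"
begin

definition trig_poly :: "(real \<Rightarrow> complex) \<Rightarrow> bool" where
  "trig_poly p \<longleftrightarrow> (\<exists>F a. finite F \<and>
      (\<forall>x. p x = (\<Sum>\<xi>\<in>F. a \<xi> * exp (2 * of_real pi * \<i> * of_real \<xi> * of_real x))))"

definition almost_periodic :: "(real \<Rightarrow> complex) \<Rightarrow> bool" where
  "almost_periodic f \<longleftrightarrow> (\<forall>e>0. \<exists>p. trig_poly p \<and> (\<forall>x. norm (f x - p x) \<le> e))"

fun rderiv :: "nat \<Rightarrow> (real \<Rightarrow> complex) \<Rightarrow> real \<Rightarrow> complex" where
  "rderiv 0 f = f"
| "rderiv (Suc n) f = (\<lambda>x. vector_derivative (rderiv n f) (at x))"

definition smooth_R :: "(real \<Rightarrow> complex) \<Rightarrow> bool" where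
  "smooth_R f \<longleftrightarrow> (\<forall>n x. rderiv n f differentiable (at x))"

definition gevrey :: "real \<Rightarrow> (real \<Rightarrow> complex) \<Rightarrow> bool" where
  "gevrey s f \<longleftrightarrow> smooth_R f \<and>
     (\<forall>K. compact K \<longrightarrow> (\<exists>C>0. \<forall>j. \<forall>x\<in>K.
         norm (rderiv j f x) \<le> C ^ (1 + j) * (fact j) powr s))"

end

theory Submission
  imports Defs
begin

(* The witness is the lacunary series
       f(x) = \<Sum>m 2^-m (e^(i lam_m x) - e^(i mu_m x)),   lam_m = 20^m,  mu_m = lam_m + gap_m,
   where the frequency gaps gap_m = exp(-\<Sum>i\<le>m (lam_i + 1)) shrink super-exponentially.
   Each summand is a trigonometric polynomial and the series converges uniformly, so f is almost
   periodic.  Since |e^(iax) - e^(ibx)| \<le> |a - b| |x|, the j-th derivative of the m-th summand is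
   bounded by 2^-m gap_m (lam_m + 1)^j (j + |x|) \<le> 2^-m j! (j + |x|); this justifies termwise
   differentiation and gives local Gevrey bounds of order 1, hence of every order s \<ge> 1.
   On the other hand f' is unbounded: at x = pi / gap_k the two exponentials of the k-th summand are
   in antiphase, so that summand contributes about 2 * 10^k to f', which dominates all others.
   Hence the uniform estimate already fails for j = 1. *)


definition wave :: "real \<Rightarrow> real \<Rightarrow> complex" where
  "wave c x = exp (\<i> * of_real (c * x))"

lemma norm_wave [simp]: "norm (wave c x) = 1"
  by (simp add: wave_def)

lemma wave_has_vector_derivative:
  "(wave c has_vector_derivative (\<i> * of_real c * wave c x)) (at x)"
proof -
  have "((\<lambda>z. exp (\<i> * of_real c * z)) has_field_derivative
          (exp (\<i> * of_real c * of_real x) * (\<i> * of_real c))) (at (of_real x))"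
    by (auto intro!: derivative_eq_intros)
  from has_vector_derivative_real_field[OF this]
  show ?thesis unfolding wave_def by (simp add: mult_ac)
qed

lemma norm_wave_diff: "norm (wave a x - wave b x) \<le> \<bar>a - b\<bar> * \<bar>x\<bar>"
proof -
  have "wave a x - wave b x = wave b x * (exp (\<i> * of_real ((a - b) * x)) - 1)"
    by (simp add: wave_def algebra_simps flip: exp_add)
  moreover have "norm (exp (\<i> * of_real ((a - b) * x)) - 1) \<le> \<bar>a - b\<bar> * \<bar>x\<bar>"
    using Taylor_exp[of "\<i> * of_real ((a - b) * x)" 0]
    by (simp add: norm_mult abs_mult flip: of_real_diff)
  ultimately show ?thesis by (simp add: norm_mult)
qed


text \<open>A single term of the exponential series: \<open>y^j / j! \<le> e^y\<close>.\<close>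
lemma power_le_fact_mult_exp:
  fixes y :: real assumes "y \<ge> 0" shows "y ^ j \<le> fact j * exp y"
proof -
  have "(\<Sum>n\<in>{j}. y ^ n /\<^sub>R fact n) \<le> exp y"
    using exp_converges[of y] assms
    by (intro sum_le_suminf[of _ "{j}", THEN order_trans]) (auto simp: sums_iff)
  then have "y ^ j / fact j \<le> exp y" by (simp add: divide_inverse mult.commute)
  then show ?thesis by (simp add: divide_le_eq mult.commute)
qed

lemma power_increment_bounds:
  fixes l d :: real assumes "l \<ge> 0" "d \<ge> 0" "d \<le> 1"
  shows "0 \<le> (l + d) ^ j - l ^ j \<and> (l + d) ^ j - l ^ j \<le> j * d * (l + 1) ^ j"
proof (induction j)
  case 0 then show ?case by simp
next
  case (Suc j)
  have split: "(l + d) ^ Suc j - l ^ Suc j = (l + d) * ((l + d) ^ j - l ^ j) + d * l ^ j"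
    by (simp add: algebra_simps)
  have "(l + d) * ((l + d) ^ j - l ^ j) \<le> (l + 1) * (j * d * (l + 1) ^ j)"
    using Suc assms by (intro mult_mono) auto
  moreover have "d * l ^ j \<le> d * (l + 1) ^ Suc j"
  proof -
    have "l ^ j \<le> (l + 1) ^ j" using assms by (intro power_mono) auto
    also have "\<dots> \<le> (l + 1) ^ Suc j" using assms by (intro power_increasing) auto
    finally show ?thesis using assms by (intro mult_left_mono) auto
  qed
  moreover have "Suc j * d * (l + 1) ^ Suc j = (l + 1) * (j * d * (l + 1) ^ j) + d * (l + 1) ^ Suc j"
    by (simp add: algebra_simps)
  moreover have "0 \<le> (l + d) * ((l + d) ^ j - l ^ j)" "0 \<le> d * l ^ j"
    using Suc assms by auto
  ultimately show ?case unfolding split by linarith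
qed

lemma linear_le_power:
  fixes R :: real assumes "R \<ge> 0" shows "j + R \<le> (R + 2) ^ (1 + j)"
proof -
  have "1 + real (1 + j) * (R + 1) \<le> (1 + (R + 1)) ^ (1 + j)"
    using assms by (intro Bernoulli_inequality) auto
  moreover have "0 \<le> j * R" using assms by simp
  ultimately show ?thesis by (simp add: algebra_simps)
qed


section \<open>Termwise differentiation of series\<close>

lemma has_vector_derivative_series:
  fixes g g' :: "nat \<Rightarrow> real \<Rightarrow> 'a::banach"
  assumes deriv: "\<And>n y. (g n has_vector_derivative g' n y) (at y)"
    and dominated: "\<And>R. \<exists>M. summable M \<and> (\<forall>n y. \<bar>y\<bar> \<le> R \<longrightarrow> norm (g' n y) \<le> M n)"
    and summable: "\<And>y. summable (\<lambda>n. g n y)"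
  shows "((\<lambda>y. \<Sum>n. g n y) has_vector_derivative (\<Sum>n. g' n x)) (at x)"
proof -
  define S where "S = ball x 1"
  have S: "x \<in> S" "open S" "convex S" by (auto simp: S_def)
  obtain M where M: "summable M" "\<And>n y. \<bar>y\<bar> \<le> \<bar>x\<bar> + 1 \<Longrightarrow> norm (g' n y) \<le> M n"
    using dominated[of "\<bar>x\<bar> + 1"] by blast
  have "uniform_limit S (\<lambda>n y. \<Sum>i<n. g' i y) (\<lambda>y. \<Sum>i. g' i y) sequentially"
    by (rule Weierstrass_m_test[OF _ M(1)]) (use M(2) in \<open>auto simp: S_def dist_real_def\<close>)
  then have uniform: "\<forall>\<^sub>F n in sequentially. \<forall>y\<in>S. norm ((\<Sum>i<n. g' i y) - (\<Sum>i. g' i y)) < e"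
    if "e > 0" for e
    using that unfolding uniform_limit_iff dist_norm by blast
  have "\<exists>G. \<forall>y\<in>S. (\<lambda>n. g n y) sums (G y) \<and>
          (G has_derivative (\<lambda>h. h *\<^sub>R (\<Sum>i. g' i y))) (at y within S)"
  proof (rule has_derivative_series[where f' = "\<lambda>n y h. h *\<^sub>R g' n y"])
    show "(g n has_derivative (\<lambda>h. h *\<^sub>R g' n y)) (at y within S)" for n y
      using deriv[of n y] unfolding has_vector_derivative_def by (rule has_derivative_at_withinI)
    show "\<forall>\<^sub>F n in sequentially. \<forall>y\<in>S. \<forall>h.
            norm ((\<Sum>i<n. h *\<^sub>R g' i y) - h *\<^sub>R (\<Sum>i. g' i y)) \<le> e * norm h" if "e > 0" for e
      using uniform[OF that]
    proof eventually_elim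
      case (elim n)
      have "\<bar>h\<bar> * norm ((\<Sum>i<n. g' i y) - (\<Sum>i. g' i y)) \<le> \<bar>h\<bar> * e" if "y \<in> S" for y h
        using elim that by (intro mult_left_mono) auto
      then show ?case
        by (simp add: mult.commute flip: scaleR_sum_right scaleR_diff_right)
    qed
    show "(\<lambda>n. g n x) sums (\<Sum>n. g n x)" using summable by (simp add: summable_sums)
  qed (use S in auto)
  then obtain G where G: "\<And>y. y \<in> S \<Longrightarrow> (\<lambda>n. g n y) sums (G y)"
     "(G has_derivative (\<lambda>h. h *\<^sub>R (\<Sum>i. g' i x))) (at x)"
    using S by (metis at_within_open)
  have "((\<lambda>y. \<Sum>n. g n y) has_derivative (\<lambda>h. h *\<^sub>R (\<Sum>i. g' i x))) (at x)"
    by (rule has_derivative_transform_within_open[OF G(2) S(2,1)]) (use G(1) in \<open>auto simp: sums_iff\<close>)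
  then show ?thesis by (simp add: has_vector_derivative_def)
qed

lemma rderiv_of_derivative_chain:
  assumes "\<And>j x. (F j has_vector_derivative F (Suc j) x) (at x)"
  shows "rderiv j (F 0) = F j"
proof (induction j)
  case (Suc j)
  show ?case by (rule ext) (simp add: Suc vector_derivative_at[OF assms])
qed simp

lemma smooth_of_derivative_chain:
  assumes "\<And>j x. (F j has_vector_derivative F (Suc j) x) (at x)"
  shows "smooth_R (F 0)"
proof -
  have "rderiv j (F 0) = F j" for j using assms by (rule rderiv_of_derivative_chain)
  then show ?thesis unfolding smooth_R_def using assms by (metis differentiableI_vector)
qed


section \<open>Trigonometric polynomials and almost periodicity\<close>

lemma trig_poly_wave: "trig_poly (\<lambda>x. c * wave l x)"
  unfolding trig_poly_def
proof (intro exI conjI allI)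
  fix x
  have "2 * of_real pi * \<i> * of_real (l / (2 * pi)) * of_real x = \<i> * (of_real (l * x) :: complex)"
    by (simp add: field_simps)
  then show "c * wave l x = (\<Sum>\<xi>\<in>{l / (2 * pi)}. (\<lambda>_. c) \<xi> *
               exp (2 * of_real pi * \<i> * of_real \<xi> * of_real x))"
    by (simp add: wave_def mult.assoc)
qed simp

lemma trig_poly_add:
  assumes "trig_poly p" "trig_poly q" shows "trig_poly (\<lambda>x. p x + q x)"
proof -
  let ?E = "\<lambda>\<xi> x. exp (2 * of_real pi * \<i> * of_real \<xi> * of_real x) :: complex"
  obtain F a where F: "finite F" "\<And>x. p x = (\<Sum>\<xi>\<in>F. a \<xi> * ?E \<xi> x)"
    using assms(1) unfolding trig_poly_def by blast
  obtain G b where G: "finite G" "\<And>x. q x = (\<Sum>\<xi>\<in>G. b \<xi> * ?E \<xi> x)"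
    using assms(2) unfolding trig_poly_def by blast
  define a' where "a' \<xi> = (if \<xi> \<in> F then a \<xi> else 0)" for \<xi>
  define b' where "b' \<xi> = (if \<xi> \<in> G then b \<xi> else 0)" for \<xi>
  have "p x = (\<Sum>\<xi>\<in>F \<union> G. a' \<xi> * ?E \<xi> x)" for x
    unfolding F(2) a'_def using F(1) G(1) by (intro sum.mono_neutral_cong_left) auto
  moreover have "q x = (\<Sum>\<xi>\<in>F \<union> G. b' \<xi> * ?E \<xi> x)" for x
    unfolding G(2) b'_def using F(1) G(1) by (intro sum.mono_neutral_cong_left) auto
  ultimately show ?thesis
    unfolding trig_poly_def using F(1) G(1)
    by (intro exI[of _ "F \<union> G"] exI[of _ "\<lambda>\<xi>. a' \<xi> + b' \<xi>"])
       (simp add: distrib_right sum.distrib)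
qed

lemma trig_poly_sum:
  assumes "finite I" "\<And>i. i \<in> I \<Longrightarrow> trig_poly (p i)"
  shows "trig_poly (\<lambda>x. \<Sum>i\<in>I. p i x)"
  using assms
proof (induction I rule: finite_induct)
  case empty
  show ?case unfolding trig_poly_def by (intro exI[of _ "{}"]) simp
qed (simp add: trig_poly_add)

lemma almost_periodic_series:
  assumes "\<And>m. trig_poly (g m)" and "\<And>m x. norm (g m x) \<le> M m" and "summable M"
  shows "almost_periodic (\<lambda>x. \<Sum>m. g m x)"
  unfolding almost_periodic_def
proof (intro allI impI)
  fix e :: real assume "e > 0"
  then obtain n where n: "norm (\<Sum>i. M (i + n)) < e"
    using suminf_exist_split[OF _ assms(3)] by blast
  have summable_g: "summable (\<lambda>m. g m x)" for x
    using assms(3,2) by (rule summable_comparison_test')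
  have "norm ((\<Sum>m. g m x) - (\<Sum>m<n. g m x)) \<le> e" for x
  proof -
    have "norm ((\<Sum>m. g m x) - (\<Sum>m<n. g m x)) = norm (\<Sum>i. g (i + n) x)"
      using suminf_split_initial_segment[OF summable_g, of x n] by simp
    also have "\<dots> \<le> (\<Sum>i. M (i + n))"
      using assms(2,3) by (intro norm_suminf_le) (auto simp: summable_iff_shift)
    finally show ?thesis using n by simp
  qed
  moreover have "trig_poly (\<lambda>x. \<Sum>m<n. g m x)" by (intro trig_poly_sum assms(1)) simp
  ultimately show "\<exists>p. trig_poly p \<and> (\<forall>x. norm ((\<Sum>m. g m x) - p x) \<le> e)" by blast
qed


section \<open>A criterion for the Gevrey class\<close>

text \<open>Derivative bounds of the form \<open>A j! (j + |x|)\<close> give Gevrey bounds of every order \<open>s \<ge> 1\<close>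
  on compact sets: the factor \<open>j + |x|\<close> is absorbed into a geometric factor.\<close>
lemma gevrey_of_factorial_bounds:
  assumes "smooth_R f" "s \<ge> 1" "A \<ge> 0"
    and bound: "\<And>j x. norm (rderiv j f x) \<le> A * (fact j * (j + \<bar>x\<bar>))"
  shows "gevrey s f"
  unfolding gevrey_def
proof (intro conjI allI impI)
  fix K :: "real set" assume "compact K"
  then obtain R0 where "\<And>x. x \<in> K \<Longrightarrow> \<bar>x\<bar> \<le> R0"
    by (metis bounded_iff compact_imp_bounded real_norm_def)
  then obtain R where R: "R \<ge> 0" "\<And>x. x \<in> K \<Longrightarrow> \<bar>x\<bar> \<le> R"
    by (metis max.cobounded1 max.coboundedI2)
  define C where "C = (A + 1) * (R + 2)"
  have "norm (rderiv j f x) \<le> C ^ (1 + j) * fact j powr s" if "x \<in> K" for j x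
  proof -
    have "A \<le> (A + 1) ^ 1" by simp
    also have "\<dots> \<le> (A + 1) ^ (1 + j)" using assms(3) by (intro power_increasing) auto
    finally have "A \<le> (A + 1) ^ (1 + j)" .
    moreover have "j + \<bar>x\<bar> \<le> (R + 2) ^ (1 + j)"
      using linear_le_power[OF R(1), of j] R(2)[OF that] by linarith
    ultimately have "A * (j + \<bar>x\<bar>) \<le> C ^ (1 + j)"
      unfolding C_def power_mult_distrib using assms(3) by (intro mult_mono) auto
    moreover have "fact j \<le> (fact j :: real) powr s"
      using powr_mono[of 1 s "fact j :: real"] assms(2) by simp
    ultimately have "A * (j + \<bar>x\<bar>) * fact j \<le> C ^ (1 + j) * fact j powr s"
      using assms(3) R(1) by (intro mult_mono) (auto simp: C_def)
    with bound[of j x] show ?thesis by (simp add: mult_ac)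
  qed
  moreover have "C > 0" using assms(3) R(1) by (simp add: C_def)
  ultimately show "\<exists>C>0. \<forall>j. \<forall>x\<in>K. norm (rderiv j f x) \<le> C ^ (1 + j) * fact j powr s"
    by blast
qed (use assms(1) in simp)


definition weight :: "nat \<Rightarrow> real" where "weight m = (1/2) ^ m"
definition lam :: "nat \<Rightarrow> real" where "lam m = 20 ^ m"
definition gap :: "nat \<Rightarrow> real" where "gap m = exp (- (\<Sum>i\<le>m. lam i + 1))"
definition mu :: "nat \<Rightarrow> real" where "mu m = lam m + gap m"

text \<open>\<open>summand j m\<close> is the \<open>j\<close>-th derivative of the \<open>m\<close>-th summand, and \<open>F j\<close> that of the witness.\<close>
definition summand :: "nat \<Rightarrow> nat \<Rightarrow> real \<Rightarrow> complex" where
  "summand j m x = of_real (weight m) *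
     ((\<i> * of_real (lam m)) ^ j * wave (lam m) x - (\<i> * of_real (mu m)) ^ j * wave (mu m) x)"

definition F :: "nat \<Rightarrow> real \<Rightarrow> complex" where "F j x = (\<Sum>m. summand j m x)"

lemma weight_nonneg: "weight m \<ge> 0" by (simp add: weight_def)
lemma lam_ge1: "lam m \<ge> 1" by (simp add: lam_def)
lemma weight_lam: "weight m * lam m = 10 ^ m"
  unfolding weight_def lam_def by (simp flip: power_mult_distrib)

lemma summable_weight: "summable weight"
  unfolding weight_def by (rule summable_geometric) simp

lemma suminf_weight: "(\<Sum>m. weight m) = 2"
  unfolding weight_def using suminf_geometric[of "1/2::real"] by simp

lemma gap_pos: "gap m > 0" by (simp add: gap_def)

lemma gap_le_exp: "gap m \<le> exp (- (lam m + 1))"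
proof -
  have "lam m + 1 \<le> (\<Sum>i\<le>m. lam i + 1)"
    using lam_ge1 by (intro member_le_sum) (auto intro: add_nonneg_nonneg order.trans[OF zero_le_one])
  then show ?thesis by (simp add: gap_def)
qed

lemma gap_le1: "gap m \<le> 1"
  using gap_le_exp[of m] lam_ge1[of m] by (simp add: order.trans[OF _ exp_le_one_iff[THEN iffD2]])

lemma gap_decay: assumes "k < m" shows "gap m \<le> gap k * exp (- (lam m + 1))"
proof -
  have nonneg: "0 \<le> lam i + 1" for i using lam_ge1[of i] by simp
  have "(\<Sum>i\<le>k. lam i + 1) + (lam m + 1) = (\<Sum>i\<in>insert m {..k}. lam i + 1)"
    using assms by simp
  also have "\<dots> \<le> (\<Sum>i\<le>m. lam i + 1)"
    using assms nonneg by (intro sum_mono2) auto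
  finally show ?thesis by (simp add: gap_def flip: exp_add)
qed

lemma gap_power_le_fact: "gap m * (lam m + 1) ^ j \<le> fact j"
proof -
  have "gap m * (lam m + 1) ^ j \<le> exp (- (lam m + 1)) * (fact j * exp (lam m + 1))"
    using gap_le_exp[of m] gap_pos[of m] power_le_fact_mult_exp[of "lam m + 1" j] lam_ge1[of m]
    by (intro mult_mono) auto
  also have "\<dots> = fact j" by (simp flip: exp_add)
  finally show ?thesis .
qed


lemma summand_has_vector_derivative: "(summand j m has_vector_derivative summand (Suc j) m x) (at x)"
proof -
  have "((\<lambda>x. summand j m x) has_vector_derivative
       of_real (weight m) * ((\<i> * of_real (lam m)) ^ j * (\<i> * of_real (lam m) * wave (lam m) x)
       - (\<i> * of_real (mu m)) ^ j * (\<i> * of_real (mu m) * wave (mu m) x))) (at x)"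
    unfolding summand_def
    by (intro has_vector_derivative_mult_right has_vector_derivative_diff wave_has_vector_derivative)
  then show ?thesis unfolding summand_def[abs_def] by (simp add: mult_ac)
qed

text \<open>The basic estimate: the two waves of a summand nearly cancel on bounded sets.\<close>
lemma norm_summand_le: "norm (summand j m x) \<le> weight m * gap m * (lam m + 1) ^ j * (j + \<bar>x\<bar>)"
proof -
  define l where "l = lam m"
  define d where "d = gap m"
  have l: "l \<ge> 0" and d: "d \<ge> 0" "d \<le> 1"
    using lam_ge1[of m] gap_pos[of m] gap_le1[of m] by (auto simp: l_def d_def)
  define amplitude_gap where "amplitude_gap = of_real (l ^ j - (l + d) ^ j) * wave l x"
  define phase_gap where "phase_gap = of_real ((l + d) ^ j) * (wave l x - wave (l + d) x)"
  have decomp: "summand j m x = of_real (weight m) * \<i> ^ j * (amplitude_gap + phase_gap)"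
    unfolding summand_def mu_def l_def[symmetric] d_def[symmetric] power_mult_distrib
      amplitude_gap_def phase_gap_def
    by (simp add: algebra_simps)
  have "norm amplitude_gap \<le> j * d * (l + 1) ^ j"
    unfolding amplitude_gap_def norm_mult norm_of_real norm_wave
    using power_increment_bounds[OF l d] by simp
  moreover have "norm phase_gap \<le> (l + 1) ^ j * (d * \<bar>x\<bar>)"
    unfolding phase_gap_def norm_mult norm_of_real using norm_wave_diff[of l x "l + d"] l d
    by (intro mult_mono) (auto intro!: power_mono)
  moreover have "norm (summand j m x) \<le> weight m * (norm amplitude_gap + norm phase_gap)"
    unfolding decomp norm_mult using weight_nonneg[of m]
    by (simp add: norm_power mult_left_mono norm_triangle_ineq)
  ultimately have "norm (summand j m x) \<le> weight m * (j * d * (l + 1) ^ j + (l + 1) ^ j * (d * \<bar>x\<bar>))"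
    using weight_nonneg[of m] by (meson add_mono mult_left_mono order_trans)
  then show ?thesis by (simp add: l_def d_def algebra_simps)
qed

lemma norm_summand_le_fact: "norm (summand j m x) \<le> weight m * (fact j * (j + \<bar>x\<bar>))"
proof -
  have "norm (summand j m x) \<le> weight m * (gap m * (lam m + 1) ^ j) * (j + \<bar>x\<bar>)"
    using norm_summand_le[of j m x] by (simp add: mult_ac)
  also have "\<dots> \<le> weight m * fact j * (j + \<bar>x\<bar>)"
    using gap_power_le_fact[of m j] weight_nonneg[of m] by (intro mult_right_mono mult_left_mono) auto
  finally show ?thesis by (simp add: mult_ac)
qed

lemma summable_summand: "summable (\<lambda>m. summand j m x)"
  using summable_mult2[OF summable_weight] norm_summand_le_fact
  by (rule summable_comparison_test')

lemma norm_F_le: "norm (F j x) \<le> 2 * (fact j * (j + \<bar>x\<bar>))"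
proof -
  have "norm (F j x) \<le> (\<Sum>m. weight m * (fact j * (j + \<bar>x\<bar>)))"
    unfolding F_def by (rule norm_suminf_le[OF norm_summand_le_fact summable_mult2[OF summable_weight]])
  also have "\<dots> = 2 * (fact j * (j + \<bar>x\<bar>))"
    using suminf_mult2[OF summable_weight] suminf_weight by simp
  finally show ?thesis .
qed

lemma F_has_vector_derivative: "(F j has_vector_derivative F (Suc j) x) (at x)"
proof -
  have "\<exists>M. summable M \<and> (\<forall>m y. \<bar>y\<bar> \<le> R \<longrightarrow> norm (summand (Suc j) m y) \<le> M m)" for R
  proof (intro exI conjI allI impI)
    show "summable (\<lambda>m. weight m * (fact (Suc j) * (Suc j + R)))"
      by (rule summable_mult2[OF summable_weight])
    fix m y assume "\<bar>y\<bar> \<le> R"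
    then have "weight m * (fact (Suc j) * (Suc j + \<bar>y\<bar>)) \<le> weight m * (fact (Suc j) * (Suc j + R))"
      using weight_nonneg[of m] by (intro mult_left_mono) auto
    then show "norm (summand (Suc j) m y) \<le> weight m * (fact (Suc j) * (Suc j + R))"
      using norm_summand_le_fact[of "Suc j" m y] by linarith
  qed
  from has_vector_derivative_series[OF summand_has_vector_derivative this summable_summand]
  show ?thesis by (simp add: F_def[abs_def])
qed


lemma rderiv_F: "rderiv j (F 0) = F j"
  by (rule rderiv_of_derivative_chain) (rule F_has_vector_derivative)

lemma almost_periodic_F: "almost_periodic (F 0)"
proof -
  have "trig_poly (summand 0 m)" for m
  proof -
    have "summand 0 m = (\<lambda>x. of_real (weight m) * wave (lam m) x + (- of_real (weight m)) * wave (mu m) x)"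
      by (simp add: summand_def fun_eq_iff algebra_simps)
    then show ?thesis by (simp only:) (intro trig_poly_add trig_poly_wave)
  qed
  moreover have "norm (summand 0 m x) \<le> 2 * weight m" for m x
  proof -
    have "norm (wave (lam m) x - wave (mu m) x) \<le> 2"
      using norm_triangle_ineq4[of "wave (lam m) x" "wave (mu m) x"] by simp
    then show ?thesis
      using weight_nonneg[of m] by (simp add: summand_def norm_mult) (metis mult.commute mult_left_mono)
  qed
  ultimately show ?thesis
    unfolding F_def[abs_def] by (rule almost_periodic_series) (simp add: summable_weight)
qed

lemma gevrey_F: assumes "s \<ge> 1" shows "gevrey s (F 0)"
proof (rule gevrey_of_factorial_bounds[where A = 2])
  show "smooth_R (F 0)" by (rule smooth_of_derivative_chain) (rule F_has_vector_derivative)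
  show "norm (rderiv j (F 0) x) \<le> 2 * (fact j * (j + \<bar>x\<bar>))" for j x
    unfolding rderiv_F by (rule norm_F_le)
qed (use assms in auto)

text \<open>At \<open>pi / gap k\<close> the two waves of the \<open>k\<close>-th summand are in antiphase.\<close>
lemma norm_summand1_resonant: "norm (summand 1 k (pi / gap k)) \<ge> 2 * 10 ^ k"
proof -
  define x where "x = pi / gap k"
  have "mu k * x = lam k * x + pi" using gap_pos[of k] by (simp add: mu_def x_def field_simps)
  then have antiphase: "wave (mu k) x = - wave (lam k) x"
    by (simp add: wave_def distrib_left exp_add)
  have eq: "summand 1 k x = of_real (weight k * (lam k + mu k)) * \<i> * wave (lam k) x"
    by (simp add: summand_def antiphase algebra_simps)
  have "0 \<le> weight k * (lam k + mu k)"
    using lam_ge1[of k] gap_pos[of k] weight_nonneg[of k] by (simp add: mu_def)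
  then have "norm (summand 1 k x) = weight k * (lam k + mu k)"
    unfolding eq norm_mult norm_of_real by simp
  also have "\<dots> \<ge> weight k * (2 * lam k)"
    using gap_pos[of k] weight_nonneg[of k] by (intro mult_left_mono) (auto simp: mu_def)
  finally show ?thesis using weight_lam[of k] unfolding x_def by simp
qed

lemma norm_summand1_le: "norm (summand 1 m x) \<le> 2 * 10 ^ m + 1"
proof -
  let ?a = "\<i> * of_real (lam m) * wave (lam m) x" and ?b = "\<i> * of_real (mu m) * wave (mu m) x"
  have "0 \<le> mu m" using lam_ge1[of m] gap_pos[of m] by (simp add: mu_def)
  then have "norm ?a = lam m" "norm ?b = mu m"
    using lam_ge1[of m] by (simp_all add: norm_mult)
  then have "norm (?a - ?b) \<le> lam m + mu m"
    using norm_triangle_ineq4[of ?a ?b] by simp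
  then have "norm (summand 1 m x) \<le> weight m * (lam m + mu m)"
    using weight_nonneg[of m] by (simp add: summand_def norm_mult mult_left_mono)
  also have "\<dots> \<le> 2 * (weight m * lam m) + weight m"
    using mult_left_le_one_le[OF weight_nonneg[of m] less_imp_le[OF gap_pos[of m]] gap_le1[of m]]
    by (simp add: mu_def algebra_simps)
  also have "\<dots> \<le> 2 * 10 ^ m + 1"
    using weight_lam[of m] by (simp add: weight_def power_le_one)
  finally show ?thesis .
qed

text \<open>The earlier summands together contribute at most a quarter of the resonant one.\<close>
lemma sum_early_bound: "(\<Sum>m<k. 2 * 10 ^ m + 1 :: real) \<le> 10 ^ k / 2"
proof (induction k)
  case (Suc k)
  have "(\<Sum>m<Suc k. 2 * 10 ^ m + 1 :: real) = (\<Sum>m<k. 2 * 10 ^ m + 1) + (2 * 10 ^ k + 1)"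
    by simp
  moreover have "(1::real) \<le> 10 ^ k" "(10::real) ^ Suc k = 10 * 10 ^ k" by simp_all
  ultimately show ?case using Suc by linarith
qed simp

text \<open>The later summands are negligible at \<open>pi / gap k\<close>, thanks to \<open>gap_decay\<close>.\<close>
lemma norm_summand1_late: assumes "k < m" shows "norm (summand 1 m (pi / gap k)) \<le> 5 * weight m"
proof -
  define E where "E = exp (- (lam m + 1))"
  have "gap m / gap k \<le> E"
    using gap_decay[OF assms] gap_pos[of k] by (simp add: E_def divide_le_eq mult.commute)
  then have "pi * (gap m / gap k) \<le> pi * E" by (intro mult_left_mono) auto
  then have gap_small: "gap m * (1 + pi / gap k) \<le> (1 + pi) * E"
    using gap_le_exp[of m] by (simp add: E_def algebra_simps)
  have E_small: "E * (lam m + 1) \<le> 1"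
  proof -
    have "E * (lam m + 1) \<le> E * exp (lam m + 1)"
      using power_le_fact_mult_exp[of "lam m + 1" 1] lam_ge1[of m] by (simp add: E_def)
    then show ?thesis by (simp add: E_def flip: exp_add)
  qed
  have "gap m * (1 + pi / gap k) * (lam m + 1) \<le> (1 + pi) * E * (lam m + 1)"
    using gap_small lam_ge1[of m] by (intro mult_right_mono) auto
  also have "\<dots> = (1 + pi) * (E * (lam m + 1))" by simp
  also have "\<dots> \<le> 1 + pi" using E_small pi_gt_zero by (intro mult_left_le) auto
  finally have "weight m * (gap m * (1 + pi / gap k) * (lam m + 1)) \<le> weight m * 5"
    using pi_less_4 weight_nonneg[of m] by (intro mult_left_mono) auto
  moreover have "norm (summand 1 m (pi / gap k)) \<le> weight m * (gap m * (1 + pi / gap k) * (lam m + 1))"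
    using norm_summand_le[of 1 m "pi / gap k"] gap_pos[of k] by (simp add: mult_ac)
  ultimately show ?thesis by simp
qed

lemma norm_F1_lower: "norm (F 1 (pi / gap k)) \<ge> 3/2 * 10 ^ k - 10"
proof -
  define x where "x = pi / gap k"
  define late where "late = (\<Sum>i. summand 1 (i + Suc k) x)"
  define early where "early = (\<Sum>m<k. summand 1 m x)"
  have split: "F 1 x = late + early + summand 1 k x"
    unfolding F_def late_def early_def
    using suminf_split_initial_segment[OF summable_summand, of 1 x "Suc k"] by simp
  have "norm late \<le> (\<Sum>i. 5 * (1/2::real) ^ i)"
    unfolding late_def
  proof (rule norm_suminf_le)
    show "norm (summand 1 (i + Suc k) x) \<le> 5 * (1/2) ^ i" for i
      using norm_summand1_late[of k "i + Suc k"] power_decreasing[of i "i + Suc k" "1/2::real"]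
      unfolding x_def weight_def by simp
  qed (intro summable_mult summable_geometric, simp)
  also have "\<dots> = 10"
    using suminf_geometric[of "1/2::real"] by (simp add: suminf_mult)
  finally have "norm late \<le> 10" .
  moreover have "norm early \<le> 10 ^ k / 2"
  proof -
    have "norm early \<le> (\<Sum>m<k. norm (summand 1 m x))" unfolding early_def by (rule norm_sum)
    also have "\<dots> \<le> (\<Sum>m<k. 2 * 10 ^ m + 1)" by (intro sum_mono norm_summand1_le)
    finally show ?thesis using sum_early_bound[of k] by linarith
  qed
  moreover have "norm (summand 1 k x) \<le> norm (F 1 x) + norm late + norm early"
    using norm_triangle_ineq4[of "F 1 x - late" early] norm_triangle_ineq4[of "F 1 x" late]
    unfolding split by (simp add: algebra_simps)
  ultimately show ?thesis using norm_summand1_resonant[of k] unfolding x_def by linarith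
qed

lemma F1_unbounded: "\<not> (\<forall>x. norm (F 1 x) \<le> M)"
proof
  assume bound: "\<forall>x. norm (F 1 x) \<le> M"
  obtain k where k: "M + 20 < (10::real) ^ k"
    using real_arch_pow[of 10 "M + 20"] by auto
  have "3/2 * 10 ^ k - 10 \<le> M"
    using norm_F1_lower[of k] bound by (meson order_trans)
  then show False using k zero_le_power[of "10::real" k] by linarith
qed


theorem mainTheorem1:
  fixes s :: real
  assumes "s > 1"
  shows "\<exists>f :: real \<Rightarrow> complex. almost_periodic f \<and> gevrey s f \<and>
           \<not> (\<exists>B>0. \<exists>C>0. \<forall>j. \<forall>x. norm (rderiv j f x) \<le> B * C ^ j * (fact j) powr s)"
proof (intro exI conjI)
  show "almost_periodic (F 0)" by (rule almost_periodic_F)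
  show "gevrey s (F 0)" using assms by (intro gevrey_F) simp
  show "\<not> (\<exists>B>0. \<exists>C>0. \<forall>j. \<forall>x. norm (rderiv j (F 0) x) \<le> B * C ^ j * (fact j) powr s)"
  proof
    assume "\<exists>B>0. \<exists>C>0. \<forall>j. \<forall>x. norm (rderiv j (F 0) x) \<le> B * C ^ j * (fact j) powr s"
    then obtain B C where "\<forall>x. norm (rderiv 1 (F 0) x) \<le> B * C ^ 1 * fact 1 powr s"
      by blast
    then have "\<forall>x. norm (F 1 x) \<le> B * C" by (simp add: rderiv_F)
    with F1_unbounded show False by blast
  qed
qed

end
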